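(* Let $S\subset\mathbb{R}^q$ be compact and $\ell:\mathbb{R}^q\times\mathbb{R}^q\to(0,1)$ continuous. Let $s\in S$ and let $(\xi_k)_{k\in\mathbb{N}}\subset\mathbb{R}^q$ be a bounded sequence. Let $d_1,d_2,\dots\in\{0,1\}$ be independent random variables with $\Pr(d_k=1)=\ell(s,\xi_k)$. Let $c_1,\dots,c_M\in S$ be distinct, let $\hat p_0:\{1,\dots,M\}\to(0,1)$ with $\sum_i\hat p_0(i)=1$, and define $\hat p_k$ by the recursion $$\hat p_k(i\mid d_{1:k};\xi_{1:k})=\frac{g(d_k\mid c_i;\xi_k)\,\hat p_{k-1}(i\mid d_{1:k-1};\xi_{1:k-1})}{\sum_{j=1}^M g(d_k\mid c_j;\xi_k)\,\hat p_{k-1}(j\mid d_{1:k-1};\xi_{1:k-1})},$$ where $g(d\mid x;\xi)=\ell(x,\xi)^d(1-\ell(x,\xi))^{1-d}$. For $i,j\in\{1,\dots,M\}$ define $$\mu^{(i,j)}_k=\ell(s,\xi_k)\ln\frac{\ell(c_i,\xi_k)}{\ell(c_j,\xi_k)}+(1-\ell(s,\xi_k))\ln\frac{1-\ell(c_i,\xi_k)}{1-\ell(c_j,\xi_k)}.$$ If there exist a pair $(i,j)$ and some $p>\tfrac12$ such that $$\limsup_{n\to\infty}\frac{1}{n^p}\sum_{k=1}^n\mu^{(i,j)}_k<0,$$ then $\hat p_k(i\mid d_{1:k};\xi_{1:k})\to 0$ almost surely as $k\to\infty$.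
   Context: $\mu^{(i,j)}_k$ is the expected value, under the true source location $s$, of the log-likelihood ratio $\ln[g(d_k\mid c_i;\xi_k)/g(d_k\mid c_j;\xi_k)]$. *)

theory Defs
  imports "HOL-Probability.Probability"
begin

definition lik :: "('x \<Rightarrow> 'y \<Rightarrow> real) \<Rightarrow> nat \<Rightarrow> 'x \<Rightarrow> 'y \<Rightarrow> real" where
  "lik l d x xi = l x xi ^ d * (1 - l x xi) ^ (1 - d)"

text \<open>Recursive Bayesian posterior over candidates c 1, ..., c M, given the realised
  observations dd 1, dd 2, ... and query points xi 1, xi 2, ...  (index 0 unused).\<close>
fun phat :: "('x \<Rightarrow> 'y \<Rightarrow> real) \<Rightarrow> (nat \<Rightarrow> 'x) \<Rightarrow> nat \<Rightarrow> (nat \<Rightarrow> real) \<Rightarrow>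
             (nat \<Rightarrow> 'y) \<Rightarrow> (nat \<Rightarrow> nat) \<Rightarrow> nat \<Rightarrow> nat \<Rightarrow> real" where
  "phat l c M p0 xi dd 0 i = p0 i"
| "phat l c M p0 xi dd (Suc k) i =
     lik l (dd (Suc k)) (c i) (xi (Suc k)) * phat l c M p0 xi dd k i /
     (\<Sum>j = 1..M. lik l (dd (Suc k)) (c j) (xi (Suc k)) * phat l c M p0 xi dd k j)"

definition mu :: "('x \<Rightarrow> 'y \<Rightarrow> real) \<Rightarrow> 'x \<Rightarrow> (nat \<Rightarrow> 'x) \<Rightarrow> (nat \<Rightarrow> 'y) \<Rightarrow> nat \<Rightarrow> nat \<Rightarrow> nat \<Rightarrow> real" where
  "mu l s c xi k i j =
     l s (xi k) * ln (l (c i) (xi k) / l (c j) (xi k))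
     + (1 - l s (xi k)) * ln ((1 - l (c i) (xi k)) / (1 - l (c j) (xi k)))"

end

theory Submission
  imports Defs "HOL-Real_Asymp.Real_Asymp"
begin

text \<open>The posterior odds of candidate i against candidate j are the prior odds times
  exp (X 1 + ... + X n), where X k is the log-likelihood ratio of the k-th observation.
  The X k are independent, have means mu k, and are bounded uniformly in k because l stays
  away from 0 and 1 on the compact set S \<times> closure (range xi). Hoeffding's inequality bounds
  the probability that the sum exceeds its mean by \<epsilon> n^p by exp (-C n^(2p - 1)), which is
  summable as p > 1/2. By Borel-Cantelli, almost surely the sum eventually stays below its
  mean plus \<epsilon> n^p, hence below -\<epsilon> n^p by the limsup hypothesis, and the posterior
  of i is squeezed to 0.\<close>

lemma bounded_away_from_0_1_on_compact:
  fixes l :: "'a::topological_space \<Rightarrow> 'b::heine_borel \<Rightarrow> real"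
  assumes "compact S" "bounded (range xi)"
    and "continuous_on UNIV (\<lambda>(x, y). l x y)"
    and "\<And>x y. 0 < l x y \<and> l x y < 1"
  obtains \<delta> where "0 < \<delta>" "\<delta> < 1"
    "\<And>x k. x \<in> S \<Longrightarrow> \<delta> \<le> l x (xi k) \<and> l x (xi k) \<le> 1 - \<delta>"
proof -
  define K where "K = S \<times> closure (range xi)"
  define f where "f = (\<lambda>z. min (l (fst z) (snd z)) (1 - l (fst z) (snd z)))"
  have "compact K"
    unfolding K_def using assms(1,2) by (intro compact_Times) auto
  moreover have "continuous_on K f"
  proof -
    have "continuous_on UNIV (\<lambda>z. l (fst z) (snd z))"
      using assms(3) by (simp add: case_prod_unfold)
    from continuous_on_subset[OF this] show ?thesis
      unfolding f_def by (intro continuous_intros) auto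
  qed
  ultimately obtain \<delta> where \<delta>: "0 < \<delta>" "\<And>z. z \<in> K \<Longrightarrow> \<delta> \<le> f z"
  proof (cases "K = {}")
    case False
    obtain z0 where "z0 \<in> K" "\<And>z. z \<in> K \<Longrightarrow> f z0 \<le> f z"
      using continuous_attains_inf[OF \<open>compact K\<close> False \<open>continuous_on K f\<close>] by blast
    moreover have "0 < f z0"
      unfolding f_def using assms(4) by simp
    ultimately show ?thesis using that by blast
  qed (use that[of 1] in simp)
  show ?thesis
  proof (rule that[of "min \<delta> (1/2)"])
    fix x k assume "x \<in> S"
    then have "(x, xi k) \<in> K"
      unfolding K_def using closure_subset by fastforce
    from \<delta>(2)[OF this] show "min \<delta> (1/2) \<le> l x (xi k) \<and> l x (xi k) \<le> 1 - min \<delta> (1/2)"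
      unfolding f_def by auto
  qed (use \<delta>(1) in auto)
qed

lemma lik_bounds:
  assumes "0 \<le> \<delta>" "\<delta> \<le> l x y" "l x y \<le> 1 - \<delta>" "e \<in> {0, 1}"
  shows "\<delta> \<le> lik l e x y \<and> lik l e x y \<le> 1"
  using assms unfolding lik_def by auto

lemma abs_ln_lik_ratio_le:
  assumes "0 < \<delta>"
    and "\<delta> \<le> l x y \<and> l x y \<le> 1 - \<delta>"
    and "\<delta> \<le> l x' y \<and> l x' y \<le> 1 - \<delta>"
    and "e \<in> {0, 1}"
  shows "\<bar>ln (lik l e x y / lik l e x' y)\<bar> \<le> - ln \<delta>"
proof -
  have "\<delta> \<le> lik l e x y" "lik l e x y \<le> 1" "\<delta> \<le> lik l e x' y" "lik l e x' y \<le> 1"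
    using lik_bounds[of \<delta> l x y e] lik_bounds[of \<delta> l x' y e] assms by auto
  with \<open>0 < \<delta>\<close> have "ln \<delta> \<le> ln (lik l e x y)" "ln (lik l e x y) \<le> 0"
    "ln \<delta> \<le> ln (lik l e x' y)" "ln (lik l e x' y) \<le> 0"
    and "ln (lik l e x y / lik l e x' y) = ln (lik l e x y) - ln (lik l e x' y)"
    by (simp_all add: ln_div)
  then show ?thesis
    by linarith
qed

context
  fixes l :: "'x \<Rightarrow> 'y \<Rightarrow> real" and Mc :: nat and p0 :: "nat \<Rightarrow> real"
  assumes l_range: "\<And>x y. 0 < l x y \<and> l x y < 1"
    and p0_range: "\<And>m. m \<in> {1..Mc} \<Longrightarrow> 0 < p0 m \<and> p0 m < 1"
begin

lemma lik_pos: "0 < lik l e x y"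
  using l_range[of x y] unfolding lik_def by simp

lemma phat_pos: "m \<in> {1..Mc} \<Longrightarrow> 0 < phat l c Mc p0 xi dd n m"
proof (induction n arbitrary: m)
  case 0
  then show ?case using p0_range by simp
next
  case (Suc n)
  then show ?case
    by (simp del: sum.cl_ivl_Suc) (intro divide_pos_pos mult_pos_pos sum_pos lik_pos; simp)
qed

lemma phat_le_1:
  assumes m: "m \<in> {1..Mc}"
  shows "phat l c Mc p0 xi dd n m \<le> 1"
proof (cases n)
  case 0
  then show ?thesis using p0_range[OF m] by simp
next
  case (Suc k)
  let ?t = "\<lambda>j. lik l (dd (Suc k)) (c j) (xi (Suc k)) * phat l c Mc p0 xi dd k j"
  have t_pos: "0 < ?t j" if "j \<in> {1..Mc}" for j
    using that by (intro mult_pos_pos lik_pos phat_pos)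
  then have "?t m \<le> sum ?t {1..Mc}"
    by (intro member_le_sum m less_imp_le) auto
  with t_pos[OF m] have "?t m / sum ?t {1..Mc} \<le> 1"
    by simp
  then show ?thesis
    using Suc by (simp del: sum.cl_ivl_Suc)
qed

lemma phat_ratio_eq_exp_sum:
  assumes i: "i \<in> {1..Mc}" and j: "j \<in> {1..Mc}"
  shows "phat l c Mc p0 xi dd n i / phat l c Mc p0 xi dd n j =
    p0 i / p0 j * exp (\<Sum>k = 1..n. ln (lik l (dd k) (c i) (xi k) / lik l (dd k) (c j) (xi k)))"
proof (induction n)
  case 0
  then show ?case by simp
next
  case (Suc n)
  let ?r = "lik l (dd (Suc n)) (c i) (xi (Suc n)) / lik l (dd (Suc n)) (c j) (xi (Suc n))"
  let ?Z = "\<Sum>m = 1..Mc. lik l (dd (Suc n)) (c m) (xi (Suc n)) * phat l c Mc p0 xi dd n m"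
  have "0 < ?Z"
    using i by (intro sum_pos mult_pos_pos lik_pos phat_pos) auto
  with lik_pos phat_pos[OF j]
  have "phat l c Mc p0 xi dd (Suc n) i / phat l c Mc p0 xi dd (Suc n) j
      = ?r * (phat l c Mc p0 xi dd n i / phat l c Mc p0 xi dd n j)"
    by (simp del: sum.cl_ivl_Suc add: field_simps)
  also have "?r = exp (ln ?r)"
    using lik_pos by (simp add: divide_pos_pos)
  finally show ?case
    unfolding Suc by (simp add: exp_add mult_ac)
qed

lemma phat_le_exp_sum:
  assumes i: "i \<in> {1..Mc}" and j: "j \<in> {1..Mc}"
  shows "phat l c Mc p0 xi dd n i \<le>
    p0 i / p0 j * exp (\<Sum>k = 1..n. ln (lik l (dd k) (c i) (xi k) / lik l (dd k) (c j) (xi k)))"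
proof -
  let ?ph = "\<lambda>m. phat l c Mc p0 xi dd n m"
  have "?ph i \<le> ?ph i / ?ph j"
    using phat_pos[OF i] phat_pos[OF j] phat_le_1[OF j] by (simp add: le_divide_eq mult_left_le)
  also have "\<dots> = p0 i / p0 j * exp (\<Sum>k = 1..n. ln (lik l (dd k) (c i) (xi k) / lik l (dd k) (c j) (xi k)))"
    by (rule phat_ratio_eq_exp_sum[OF i j])
  finally show ?thesis .
qed

lemma phat_tendsto_0:
  assumes i: "i \<in> {1..Mc}" and j: "j \<in> {1..Mc}" and "0 < \<epsilon>" "0 < p"
    and llr_sum: "eventually (\<lambda>n. (\<Sum>k = 1..n. ln (lik l (dd k) (c i) (xi k) / lik l (dd k) (c j) (xi k)))
                    \<le> - \<epsilon> * real n powr p) sequentially"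
  shows "(\<lambda>n. phat l c Mc p0 xi dd n i) \<longlonglongrightarrow> 0"
proof (rule tendsto_sandwich[of "\<lambda>_. 0" _ _ "\<lambda>n. p0 i / p0 j * exp (- \<epsilon> * real n powr p)"])
  have "(\<lambda>n::nat. exp (- \<epsilon> * real n powr p)) \<longlonglongrightarrow> 0"
    using \<open>0 < \<epsilon>\<close> \<open>0 < p\<close> by real_asymp
  then show "(\<lambda>n. p0 i / p0 j * exp (- \<epsilon> * real n powr p)) \<longlonglongrightarrow> 0"
    by (rule tendsto_mult_right_zero)
  have "0 < p0 i / p0 j"
    using p0_range i j by simp
  show "eventually (\<lambda>n. phat l c Mc p0 xi dd n i \<le> p0 i / p0 j * exp (- \<epsilon> * real n powr p)) sequentially"
    using llr_sum
  proof eventually_elim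
    case (elim n)
    with \<open>0 < p0 i / p0 j\<close> phat_le_exp_sum[OF i j, of c xi dd n] show ?case
      by (smt (verit) exp_mono mult_left_mono)
  qed
  show "eventually (\<lambda>n. 0 \<le> phat l c Mc p0 xi dd n i) sequentially"
    using phat_pos[OF i] by (simp add: less_imp_le)
qed simp

end

lemma eventually_le_neg_powr_of_limsup_neg:
  fixes f :: "nat \<Rightarrow> real"
  assumes "limsup (\<lambda>n. ereal (f n / real n powr p)) < 0"
  obtains \<epsilon> where "0 < \<epsilon>" "eventually (\<lambda>n. f n \<le> - \<epsilon> * real n powr p) sequentially"
proof -
  obtain r where r: "limsup (\<lambda>n. ereal (f n / real n powr p)) < ereal r" "r < 0"
    using ereal_dense2[OF assms] by auto
  have "eventually (\<lambda>n. f n \<le> r * real n powr p) sequentially"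
    using Limsup_lessD[OF r(1)] eventually_ge_at_top[of 1]
  proof eventually_elim
    case (elim n)
    then have "f n / real n powr p < r" "0 < real n powr p"
      by simp_all
    then show ?case
      by (simp add: divide_less_eq)
  qed
  with r(2) show ?thesis
    using that[of "- r"] by simp
qed

lemma (in prob_space) expectation_comp_01_valued:
  fixes F :: "nat \<Rightarrow> real"
  assumes D: "D \<in> measurable M (count_space UNIV)"
    and D_01: "\<And>w. w \<in> space M \<Longrightarrow> D w \<in> {0, 1}"
  shows "expectation (\<lambda>w. F (D w)) =
    prob {w \<in> space M. D w = 1} * F 1 + (1 - prob {w \<in> space M. D w = 1}) * F 0"
proof -
  define E where "E = {w \<in> space M. D w = 1}"
  have E: "E \<in> sets M"
    unfolding E_def using measurable_sets[OF D, of "{1}"] by (simp add: vimage_def Int_def conj_commute)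
  have "expectation (\<lambda>w. F (D w)) = expectation (\<lambda>w. F 0 + (F 1 - F 0) * indicator E w)"
  proof (rule Bochner_Integration.integral_cong)
    fix w assume "w \<in> space M"
    with D_01[OF this] show "F (D w) = F 0 + (F 1 - F 0) * indicator E w"
      by (auto simp: E_def indicator_def)
  qed simp
  also have "\<dots> = F 0 + (F 1 - F 0) * prob E"
    using E by (subst Bochner_Integration.integral_add) (auto simp: prob_space emeasure_eq_measure)
  finally show ?thesis
    unfolding E_def by (simp add: algebra_simps)
qed

lemma (in prob_space) prob_sum_ge_expectation_plus_powr:
  assumes indep: "indep_vars (\<lambda>_. borel) X {1..}"
    and range: "\<And>k w. 1 \<le> k \<Longrightarrow> w \<in> space M \<Longrightarrow> X k w \<in> {a..b}"
    and "a < b" "1 \<le> n" "0 < \<epsilon>"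
  shows "prob {w \<in> space M.
      (\<Sum>k = 1..n. expectation (X k)) + \<epsilon> * real n powr p \<le> (\<Sum>k = 1..n. X k w)}
    \<le> exp (- 2 * \<epsilon>\<^sup>2 / (b - a)\<^sup>2 * real n powr (2 * p - 1))"
proof -
  interpret Hoeffding_ineq M "{1..n}" X "\<lambda>_. a" "\<lambda>_. b" "\<Sum>k = 1..n. expectation (X k)"
  proof unfold_locales
    show "indep_vars (\<lambda>_. borel) X {1..n}"
      by (rule indep_vars_subset[OF indep]) auto
  qed (use range in auto)
  have var_sum: "(\<Sum>k = 1..n. (b - a)\<^sup>2) = real n * (b - a)\<^sup>2"
    by simp
  have "(real n powr p)\<^sup>2 = real n powr (1 + (2 * p - 1))"
    by (simp add: power2_eq_square flip: powr_add)
  also have "\<dots> = real n * real n powr (2 * p - 1)"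
    using \<open>1 \<le> n\<close> by (simp only: powr_add) simp
  finally
  have "- 2 * (\<epsilon> * real n powr p)\<^sup>2 / (\<Sum>k = 1..n. (b - a)\<^sup>2)
      = - 2 * \<epsilon>\<^sup>2 / (b - a)\<^sup>2 * real n powr (2 * p - 1)"
    unfolding var_sum using \<open>1 \<le> n\<close> \<open>a < b\<close> by (simp add: power_mult_distrib field_simps)
  with Hoeffding_ineq_ge[of "\<epsilon> * real n powr p"] \<open>1 \<le> n\<close> \<open>a < b\<close> \<open>0 < \<epsilon>\<close>
  show ?thesis
    by simp
qed

lemma (in prob_space) AE_eventually_sum_less_expectation_plus_powr:
  assumes indep: "indep_vars (\<lambda>_. borel) X {1..}"
    and range: "\<And>k w. 1 \<le> k \<Longrightarrow> w \<in> space M \<Longrightarrow> X k w \<in> {a..b}"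
    and "a < b" "1/2 < p" "0 < \<epsilon>"
  shows "AE w in M. eventually (\<lambda>n.
    (\<Sum>k = 1..n. X k w) < (\<Sum>k = 1..n. expectation (X k)) + \<epsilon> * real n powr p) sequentially"
proof -
  define A where "A n = {w \<in> space M.
    (\<Sum>k = 1..n. expectation (X k)) + \<epsilon> * real n powr p \<le> (\<Sum>k = 1..n. X k w)}" for n
  have [measurable]: "X k \<in> borel_measurable M" if "1 \<le> k" for k
    using indep that unfolding indep_vars_def by auto
  have A_sets: "A n \<in> sets M" for n
    unfolding A_def by measurable
  have "summable (\<lambda>n. prob (A n))"
  proof (rule summable_comparison_test_ev)
    show "summable (\<lambda>n. inverse (real n ^ 2))"
      by (rule inverse_power_summable) simp
    have "eventually (\<lambda>n::nat. exp (- 2 * \<epsilon>\<^sup>2 / (b - a)\<^sup>2 * real n powr (2 * p - 1))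
        \<le> inverse (real n ^ 2)) sequentially"
      using \<open>a < b\<close> \<open>1/2 < p\<close> \<open>0 < \<epsilon>\<close> by real_asymp
    then show "eventually (\<lambda>n. norm (prob (A n)) \<le> inverse (real n ^ 2)) sequentially"
      using eventually_ge_at_top[of 1]
    proof eventually_elim
      case (elim n)
      with prob_sum_ge_expectation_plus_powr[OF indep range \<open>a < b\<close> _ \<open>0 < \<epsilon>\<close>, of n p]
      show ?case
        unfolding A_def by simp
    qed
  qed
  then have "AE w in M. eventually (\<lambda>n. w \<in> space M - A n) sequentially"
    using A_sets by (intro borel_cantelli_AE1) (auto simp: emeasure_eq_measure)
  then show ?thesis
    by (rule eventually_mono) (auto simp: A_def not_le elim: eventually_mono)
qed

lemma (in prob_space) AE_eventually_sum_bernoulli_comp_less: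
  fixes F :: "nat \<Rightarrow> nat \<Rightarrow> real"
  assumes indep: "indep_vars (\<lambda>_. count_space UNIV) d {1..}"
    and d_01: "\<And>k w. 1 \<le> k \<Longrightarrow> w \<in> space M \<Longrightarrow> d k w \<in> {0, 1}"
    and F_range: "\<And>k e. e \<in> {0, 1} \<Longrightarrow> F k e \<in> {a..b}"
    and "a < b" "1/2 < p" "0 < \<epsilon>"
  shows "AE w in M. eventually (\<lambda>n. (\<Sum>k = 1..n. F k (d k w)) <
    (\<Sum>k = 1..n. prob {w \<in> space M. d k w = 1} * F k 1 + (1 - prob {w \<in> space M. d k w = 1}) * F k 0)
      + \<epsilon> * real n powr p) sequentially"
proof -
  define X where "X k w = F k (d k w)" for k w
  have "indep_vars (\<lambda>_. borel) X {1..}"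
    unfolding X_def by (rule indep_vars_compose2[OF indep]) auto
  moreover have "X k w \<in> {a..b}" if "1 \<le> k" "w \<in> space M" for k w
    unfolding X_def using F_range d_01[OF that] by blast
  moreover have "expectation (X k) =
      prob {w \<in> space M. d k w = 1} * F k 1 + (1 - prob {w \<in> space M. d k w = 1}) * F k 0"
    if "1 \<le> k" for k
    unfolding X_def
    by (rule expectation_comp_01_valued) (use indep that d_01 in \<open>auto simp: indep_vars_def\<close>)
  then have "(\<Sum>k = 1..n. expectation (X k)) =
      (\<Sum>k = 1..n. prob {w \<in> space M. d k w = 1} * F k 1 + (1 - prob {w \<in> space M. d k w = 1}) * F k 0)" for n
    by (intro sum.cong) auto
  ultimately show ?thesis
    using AE_eventually_sum_less_expectation_plus_powr[of X a b p \<epsilon>] assms(4-6)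
    by (simp add: X_def)
qed

theorem theorem2:
  fixes S :: "(real ^ 'q) set"
    and l :: "real ^ 'q \<Rightarrow> real ^ 'q \<Rightarrow> real"
    and s :: "real ^ 'q"
    and xi :: "nat \<Rightarrow> real ^ 'q"
    and M :: "'w measure"
    and d :: "nat \<Rightarrow> 'w \<Rightarrow> nat"
    and Mc :: nat
    and c :: "nat \<Rightarrow> real ^ 'q"
    and p0 :: "nat \<Rightarrow> real"
    and i j :: nat
    and p :: real
  assumes "compact S"
    and "continuous_on UNIV (\<lambda>(x, y). l x y)"
    and "\<And>x y. 0 < l x y \<and> l x y < 1"
    and "s \<in> S"
    and "bounded (range xi)"
    and "prob_space M"
    and "prob_space.indep_vars M (\<lambda>_. count_space UNIV) d {1..}"
    and "\<And>k w. k \<ge> 1 \<Longrightarrow> w \<in> space M \<Longrightarrow> d k w \<in> {0, 1}"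
    and "\<And>k. k \<ge> 1 \<Longrightarrow> measure M {w \<in> space M. d k w = 1} = l s (xi k)"
    and "c ` {1..Mc} \<subseteq> S"
    and "inj_on c {1..Mc}"
    and "\<And>m. m \<in> {1..Mc} \<Longrightarrow> 0 < p0 m \<and> p0 m < 1"
    and "(\<Sum>m = 1..Mc. p0 m) = 1"
    and "i \<in> {1..Mc}" and "j \<in> {1..Mc}"
    and "p > 1/2"
    and "limsup (\<lambda>n. ereal ((\<Sum>k = 1..n. mu l s c xi k i j) / real n powr p)) < 0"
  shows "AE w in M. (\<lambda>k. phat l c Mc p0 xi (\<lambda>k. d k w) k i) \<longlonglongrightarrow> 0"
proof -
  interpret prob_space M by fact
  have i: "i \<in> {1..Mc}" and j: "j \<in> {1..Mc}" by fact+
  then have ci: "c i \<in> S" and cj: "c j \<in> S"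
    using \<open>c ` {1..Mc} \<subseteq> S\<close> by auto
  obtain \<delta> where \<delta>: "0 < \<delta>" "\<delta> < 1"
    and l_bound: "\<And>x k. x \<in> S \<Longrightarrow> \<delta> \<le> l x (xi k) \<and> l x (xi k) \<le> 1 - \<delta>"
    using bounded_away_from_0_1_on_compact assms(1,2,3,5) by blast
  define F where "F k e = ln (lik l e (c i) (xi k) / lik l e (c j) (xi k))" for k e
  have F_range: "F k e \<in> {ln \<delta>..- ln \<delta>}" if "e \<in> {0, 1}" for k e
    using abs_ln_lik_ratio_le[where l = l and x = "c i" and x' = "c j" and y = "xi k",
        OF \<delta>(1) l_bound[OF ci] l_bound[OF cj] that]
    unfolding F_def by (auto simp: abs_le_iff)
  have mu_eq: "(\<Sum>k = 1..n. mu l s c xi k i j) =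
      (\<Sum>k = 1..n. prob {w \<in> space M. d k w = 1} * F k 1 + (1 - prob {w \<in> space M. d k w = 1}) * F k 0)" for n
    using assms(9) by (intro sum.cong) (auto simp: mu_def F_def lik_def)
  obtain \<epsilon> where "0 < \<epsilon>"
    and mu_sum: "eventually (\<lambda>n. (\<Sum>k = 1..n. mu l s c xi k i j) \<le> - \<epsilon> * real n powr p) sequentially"
    using eventually_le_neg_powr_of_limsup_neg[OF assms(17)] by blast
  have "AE w in M. eventually (\<lambda>n. (\<Sum>k = 1..n. F k (d k w)) <
      (\<Sum>k = 1..n. mu l s c xi k i j) + \<epsilon> / 2 * real n powr p) sequentially"
    unfolding mu_eq using \<delta> \<open>0 < \<epsilon>\<close> \<open>1/2 < p\<close>
    by (intro AE_eventually_sum_bernoulli_comp_less[OF assms(7,8) F_range]) auto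
  then show ?thesis
  proof (rule eventually_mono)
    fix w
    assume "eventually (\<lambda>n. (\<Sum>k = 1..n. F k (d k w)) <
      (\<Sum>k = 1..n. mu l s c xi k i j) + \<epsilon> / 2 * real n powr p) sequentially"
    with mu_sum have "eventually (\<lambda>n. (\<Sum>k = 1..n. F k (d k w)) \<le> - (\<epsilon> / 2) * real n powr p) sequentially"
      by eventually_elim simp
    then show "(\<lambda>n. phat l c Mc p0 xi (\<lambda>k. d k w) n i) \<longlonglongrightarrow> 0"
      unfolding F_def using \<open>0 < \<epsilon>\<close> \<open>1/2 < p\<close>
      by (intro phat_tendsto_0[OF assms(3,12) i j, where \<epsilon> = "\<epsilon> / 2"]) auto
  qed
qed

end
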